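(* Let $m\le n$, $a>0$, $\lambda>0$, and let $Y\in\mathbb{R}^{m\times n}$ have singular value decomposition $Y = U\,\mathrm{Diag}(\sigma)\,V^T$ with $\sigma=(\sigma_1,\dots,\sigma_m)$, $\sigma_1\ge\dots\ge\sigma_m\ge0$, $U,V$ orthogonal. Then $$X^s = G_{\lambda,a}(Y) := U\,\mathrm{Diag}\big(g_{\lambda,a}(\sigma_1),\dots,g_{\lambda,a}(\sigma_m)\big)\,V^T$$ is a global minimizer of $\min_{X\in\mathbb{R}^{m\times n}} \tfrac12\|X-Y\|_F^2+\lambda T(X)$.
   Context: For $a>0$, $\rho_a(x)=\frac{(a+1)x}{a+x}$ for $x\ge0$. The transformed Schatten-1 penalty of $X\in\mathbb{R}^{m\times n}$ is $T(X)=\sum_{i=1}^{\mathrm{rank}(X)}\rho_a(\sigma_i(X))$, where $\sigma_i(X)$ are the singular values of $X$. For $\lambda>0$ define, with $\mathrm{sgn}(0)=0$, $$h_\lambda(x)=\mathrm{sgn}(x)\left\{\tfrac23(a+|x|)\cos\!\big(\tfrac{\varphi(x)}{3}\big)-\tfrac{2a}{3}+\tfrac{|x|}{3}\right\},\qquad \varphi(x)=\arccos\!\Big(1-\frac{27\lambda a(a+1)}{2(a+|x|)^3}\Big),$$ and the threshold $t=\lambda\frac{a+1}{a}$ if $\lambda\le\frac{a^2}{2(a+1)}$, and $t=\sqrt{2\lambda(a+1)}-\frac a2$ if $\lambda>\frac{a^2}{2(a+1)}$. The scalar thresholding function is $g_{\lambda,a}(w)=0$ if $|w|\le t$ and $g_{\lambda,a}(w)=h_\lambda(w)$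 if $|w|>t$. (It is known that $g_{\lambda,a}(x)$ is a minimizer of $y\mapsto\frac12(y-x)^2+\lambda\rho_a(|y|)$ over $y\in\mathbb{R}$.) $\|\cdot\|_F$ is the Frobenius norm. *)

theory Defs
  imports "Jordan_Normal_Form.Char_Poly"
begin

definition rho :: "real \<Rightarrow> real \<Rightarrow> real" where
  "rho a x = (a + 1) * x / (a + x)"

definition singular_values :: "real mat \<Rightarrow> real multiset" where
  "singular_values X = image_mset sqrt (proots (char_poly (X * transpose_mat X)))"

definition TS1 :: "real \<Rightarrow> real mat \<Rightarrow> real" where
  "TS1 a X = sum_mset (image_mset (rho a) (filter_mset (\<lambda>s. s > 0) (singular_values X)))"

definition frob_norm :: "real mat \<Rightarrow> real" where
  "frob_norm X = sqrt (\<Sum>i<dim_row X. \<Sum>j<dim_col X. (X $$ (i, j))\<^sup>2)"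

definition phi_ang :: "real \<Rightarrow> real \<Rightarrow> real \<Rightarrow> real" where
  "phi_ang lam a x = arccos (1 - 27 * lam * a * (a + 1) / (2 * (a + \<bar>x\<bar>) ^ 3))"

definition h_fun :: "real \<Rightarrow> real \<Rightarrow> real \<Rightarrow> real" where
  "h_fun lam a x = sgn x * (2/3 * (a + \<bar>x\<bar>) * cos (phi_ang lam a x / 3) - 2 * a / 3 + \<bar>x\<bar> / 3)"

definition thr :: "real \<Rightarrow> real \<Rightarrow> real" where
  "thr lam a = (if lam \<le> a\<^sup>2 / (2 * (a + 1)) then lam * (a + 1) / a
                else sqrt (2 * lam * (a + 1)) - a / 2)"

definition g_fun :: "real \<Rightarrow> real \<Rightarrow> real \<Rightarrow> real" where
  "g_fun lam a w = (if \<bar>w\<bar> \<le> thr lam a then 0 else h_fun lam a w)"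

definition diag_rect :: "nat \<Rightarrow> nat \<Rightarrow> (nat \<Rightarrow> real) \<Rightarrow> real mat" where
  "diag_rect m n d = mat m n (\<lambda>(i, j). if i = j then d i else 0)"

end

theory Submission
  imports Defs
begin

text \<open>
  The scalar problem \<open>min\<^sub>y\<^sub>\<ge>\<^sub>0 (y - x)\<^sup>2/2 + \<lambda> \<rho>\<^sub>a(y)\<close> is solved by \<open>g\<^sub>\<lambda>\<^sub>,\<^sub>a(x)\<close>:
  below the threshold the value at \<open>0\<close> wins by direct comparison, above it the minimizer is the
  largest root of the cubic stationarity equation, which is what the trigonometric formula
  \<open>h\<^sub>\<lambda>\<close> computes. Hence \<open>G\<^sub>\<lambda>\<^sub>,\<^sub>a(Y)\<close> attains \<open>\<Sum>\<^sub>i min\<^sub>y (y - \<sigma>\<^sub>i)\<^sup>2/2 + \<lambda> \<rho>\<^sub>a(y)\<close>.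

  For the lower bound write \<open>U\<^sup>T X V = W B\<close> with \<open>W\<close> orthogonal and \<open>B\<close> having orthogonal rows of
  lengths \<open>r\<^sub>j\<close>, the singular values of \<open>X\<close>, so \<open>B\<^sub>j\<^sub>l = r\<^sub>j Q\<^sub>j\<^sub>l\<close>. Every \<open>\<sigma>\<^sub>i r\<close> is bounded by
  \<open>\<psi>\<^sub>i + \<phi>(r)\<close> with \<open>\<phi>(r) = r\<^sup>2/2 + \<lambda> \<rho>\<^sub>a(r)\<close> and \<open>\<psi>\<^sub>i = \<sigma>\<^sub>i\<^sup>2/2 - min\<^sub>y(\<dots>)\<close>; averaging these bounds in
  \<open>\<langle>Y, X\<rangle> = \<Sum>\<^sub>i\<^sub>j \<sigma>\<^sub>i W\<^sub>i\<^sub>j r\<^sub>j Q\<^sub>j\<^sub>i\<close> with the doubly substochastic weights \<open>(W\<^sub>i\<^sub>j\<^sup>2 + Q\<^sub>j\<^sub>i\<^sup>2)/2\<close>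
  (Bessel's inequality for the columns of \<open>Q\<close>) shows that the objective at \<open>X\<close> is at least
  the same sum.
\<close>

section \<open>Scalar thresholding\<close>

lemma rho_nonneg: "a > 0 \<Longrightarrow> y \<ge> 0 \<Longrightarrow> rho a y \<ge> 0"
  unfolding rho_def by simp

lemma rho_zero [simp]: "rho a 0 = 0"
  unfolding rho_def by simp

lemma thr_pos:
  assumes a: "a > 0" and l: "lam > 0"
  shows "thr lam a > 0"
proof (cases "lam \<le> a\<^sup>2 / (2 * (a + 1))")
  case True
  thus ?thesis using a l by (simp add: thr_def)
next
  case False
  hence "a\<^sup>2 / (2 * (a + 1)) < lam" by simp
  hence "a\<^sup>2 < lam * (2 * (a + 1))" using a by (simp add: pos_divide_less_eq)
  hence "a < sqrt (2 * lam * (a + 1))" by (intro real_less_rsqrt) (simp add: algebra_simps)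
  thus ?thesis using False a by (simp add: thr_def)
qed

lemma thr_le_zero_competitor_bound:
  assumes a: "a > 0" and l: "lam > 0" and y: "y \<ge> 0"
  shows "thr lam a \<le> y / 2 + lam * (a + 1) / (a + y)"
proof (cases "lam \<le> a\<^sup>2 / (2 * (a + 1))")
  case True
  have c: "2 * (lam * (a + 1)) \<le> a\<^sup>2" using True a by (simp add: pos_le_divide_eq algebra_simps)
  have "lam * (a + 1) * y * 2 \<le> y * a\<^sup>2" using mult_left_mono[OF c y] by (simp add: algebra_simps)
  also have "\<dots> \<le> y * (a * (a + y))" using y a by (simp add: power2_eq_square mult_left_mono)
  finally have "lam * (a + 1) * y / (a * (a + y)) \<le> y / 2"
    using a y by (simp add: divide_le_eq)
  moreover have "lam * (a + 1) / a - lam * (a + 1) / (a + y) = lam * (a + 1) * y / (a * (a + y))"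
    using a y by (simp add: field_simps)
  ultimately have "lam * (a + 1) / a - lam * (a + 1) / (a + y) \<le> y / 2" by simp
  moreover have "thr lam a = lam * (a + 1) / a" using True by (simp add: thr_def)
  ultimately show ?thesis by linarith
next
  case False
  define w where "w = sqrt (2 * lam * (a + 1))"
  have w2: "w\<^sup>2 = 2 * lam * (a + 1)" unfolding w_def using l a by simp
  have "0 \<le> (a + y - w)\<^sup>2" by simp
  hence "2 * w * (a + y) \<le> (a + y)\<^sup>2 + 2 * lam * (a + 1)"
    using w2 by (simp add: power2_eq_square algebra_simps)
  hence "w \<le> (a + y) / 2 + lam * (a + 1) / (a + y)"
    using a y by (simp add: field_simps power2_eq_square)
  moreover have "thr lam a = w - a / 2" using False by (simp add: thr_def w_def)
  ultimately show ?thesis by (simp add: add_divide_distrib)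
qed

lemma zero_minimizes_below_thr:
  assumes a: "a > 0" and l: "lam > 0" and y: "y \<ge> 0" and x: "x \<le> thr lam a"
  shows "1/2 * x\<^sup>2 \<le> 1/2 * (y - x)\<^sup>2 + lam * rho a y"
proof -
  have "1/2 * (y - x)\<^sup>2 + lam * rho a y - 1/2 * x\<^sup>2 = y * (y / 2 + lam * (a + 1) / (a + y) - x)"
    unfolding rho_def using a y by (simp add: field_simps power2_eq_square)
  also have "\<dots> \<ge> 0" using thr_le_zero_competitor_bound[OF a l y] x y by simp
  finally show ?thesis by simp
qed

text \<open>Writing \<open>u = a + y\<close>, \<open>s = a + x\<close> and \<open>\<beta> = \<lambda> a (a + 1)\<close>, a positive stationary point
  of \<open>y \<mapsto> (y - x)\<^sup>2/2 + \<lambda> \<rho>\<^sub>a(y)\<close> is a root of \<open>u\<^sup>3 - s u\<^sup>2 + \<beta>\<close>, and \<open>h\<^sub>\<lambda>(x) + a\<close> is the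
  largest such root, given by the trigonometric formula.\<close>

lemma trig_cubic_root:
  fixes s \<beta> :: real
  assumes s: "s > 0" and \<beta>: "\<beta> \<ge> 0" and disc: "27 * \<beta> \<le> 4 * s ^ 3"
  defines "u \<equiv> s / 3 * (1 + 2 * cos (arccos (1 - 27 * \<beta> / (2 * s ^ 3)) / 3))"
  shows "u ^ 3 - s * u\<^sup>2 + \<beta> = 0" and "u \<ge> 2 * s / 3"
proof -
  define A where "A = 1 - 27 * \<beta> / (2 * s ^ 3)"
  define \<theta> where "\<theta> = arccos A / 3"
  define C where "C = cos \<theta>"
  have A: "-1 \<le> A" "A \<le> 1" unfolding A_def using disc s \<beta> by (simp_all add: divide_le_eq)
  have C3: "4 * C ^ 3 - 3 * C = A"
    using cos_arccos[OF A] cos_treble_cos[of \<theta>] unfolding C_def \<theta>_def by simp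
  have "0 \<le> \<theta>" "\<theta> \<le> pi / 3" using arccos_bounded[OF A] unfolding \<theta>_def by auto
  hence "C \<ge> 1/2" using cos_monotone_0_pi_le[of \<theta> "pi / 3"] cos_60 unfolding C_def by simp
  thus "u \<ge> 2 * s / 3" unfolding u_def A_def[symmetric] \<theta>_def[symmetric] C_def[symmetric]
    using s by (simp add: algebra_simps)
  have "u ^ 3 - s * u\<^sup>2 + \<beta> = s ^ 3 / 27 * (2 * (4 * C ^ 3 - 3 * C) - 2) + \<beta>"
    unfolding u_def A_def[symmetric] \<theta>_def[symmetric] C_def[symmetric]
    by (simp add: power2_eq_square power3_eq_cube field_simps)
  also have "\<dots> = 0" unfolding C3 A_def using s by (simp add: field_simps)
  finally show "u ^ 3 - s * u\<^sup>2 + \<beta> = 0" .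
qed

lemma cubic_negative_imp_discriminant:
  fixes s \<beta> v :: real
  assumes s: "s > 0" and v: "v \<ge> 0" and neg: "v ^ 3 - s * v\<^sup>2 + \<beta> < 0"
  shows "27 * \<beta> < 4 * s ^ 3"
proof -
  define p where "p = (v - 2 * s / 3)\<^sup>2 * (v + s / 3)"
  have "4 * s ^ 3 - 27 * \<beta> = 27 * p - 27 * (v ^ 3 - s * v\<^sup>2 + \<beta>)"
    unfolding p_def by (simp add: power2_eq_square power3_eq_cube field_simps)
  moreover have "p \<ge> 0" unfolding p_def using s v by simp
  ultimately show ?thesis using neg by (smt (verit))
qed

lemma cubic_root_ge_negative_point:
  fixes s \<beta> u v :: real
  assumes s: "s > 0" and u: "u \<ge> 2 * s / 3" and root: "u ^ 3 - s * u\<^sup>2 + \<beta> = 0"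
    and neg: "v ^ 3 - s * v\<^sup>2 + \<beta> < 0"
  shows "v \<le> u"
proof (rule ccontr)
  assume "\<not> v \<le> u"
  define d where "d = v - u"
  have "d > 0" using \<open>\<not> v \<le> u\<close> d_def by simp
  have "v ^ 3 - s * v\<^sup>2 + \<beta> = d * (u * (3 * u - 2 * s) + d * (3 * u - s) + d\<^sup>2)"
    using root unfolding d_def by (simp add: power2_eq_square power3_eq_cube algebra_simps)
  also have "\<dots> \<ge> 0" using \<open>d > 0\<close> u s by (intro mult_nonneg_nonneg add_nonneg_nonneg) auto
  finally show False using neg by simp
qed

lemma cubic_negative_above_thr:
  assumes a: "a > 0" and l: "lam > 0" and x: "x > thr lam a"
  obtains v where "v \<ge> a" and "v\<^sup>2 \<ge> 2 * lam * (a + 1)"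
    and "v ^ 3 - (a + x) * v\<^sup>2 + lam * (a + 1) * a < 0"
proof (cases "lam \<le> a\<^sup>2 / (2 * (a + 1))")
  case True
  have "a ^ 3 - (a + x) * a\<^sup>2 + lam * (a + 1) * a = a\<^sup>2 * (lam * (a + 1) / a - x)"
    using a by (simp add: field_simps power2_eq_square power3_eq_cube)
  also have "\<dots> < 0" using True x a by (simp add: thr_def mult_pos_neg)
  finally show ?thesis
    using that[of a] True a by (simp add: pos_le_divide_eq algebra_simps)
next
  case False
  define w where "w = sqrt (2 * lam * (a + 1))"
  have w2: "w\<^sup>2 = 2 * lam * (a + 1)" unfolding w_def using l a by simp
  have "a\<^sup>2 / (2 * (a + 1)) < lam" using False by simp
  hence "a\<^sup>2 < lam * (2 * (a + 1))" using a by (simp add: pos_divide_less_eq)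
  hence "a < w" unfolding w_def by (intro real_less_rsqrt) (simp add: algebra_simps)
  have "w ^ 3 - (a + x) * w\<^sup>2 + lam * (a + 1) * a = w\<^sup>2 * (w - a - x) + lam * (a + 1) * a"
    by (simp add: power2_eq_square power3_eq_cube algebra_simps)
  also have "\<dots> = 2 * lam * (a + 1) * (w - a / 2 - x)" unfolding w2 by (simp add: algebra_simps)
  also have "\<dots> < 0" using False x a l by (simp add: thr_def w_def[symmetric] mult_pos_neg)
  finally show ?thesis using that[of w] \<open>a < w\<close> w2 by simp
qed

lemma h_fun_cubic_root:
  assumes a: "a > 0" and l: "lam > 0" and x: "x > thr lam a"
  obtains u where "h_fun lam a x = u - a" and "u \<ge> a" and "u\<^sup>2 \<ge> 2 * lam * (a + 1)"
    and "x = (u - a) + lam * (a + 1) * a / u\<^sup>2"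
proof -
  have x0: "x > 0" using thr_pos[OF a l] x by linarith
  define s where "s = a + x"
  define \<beta> where "\<beta> = lam * (a + 1) * a"
  have s: "s > 0" and \<beta>: "\<beta> > 0" using a l x0 unfolding s_def \<beta>_def by auto
  obtain v where v: "v \<ge> a" "v\<^sup>2 \<ge> 2 * lam * (a + 1)" and neg: "v ^ 3 - s * v\<^sup>2 + \<beta> < 0"
    using cubic_negative_above_thr[OF a l x] unfolding s_def \<beta>_def by blast
  have disc: "27 * \<beta> \<le> 4 * s ^ 3"
    using cubic_negative_imp_discriminant[OF s _ neg] v a by simp
  define u where "u = s / 3 * (1 + 2 * cos (arccos (1 - 27 * \<beta> / (2 * s ^ 3)) / 3))"
  have root: "u ^ 3 - s * u\<^sup>2 + \<beta> = 0" and u23: "u \<ge> 2 * s / 3"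
    using trig_cubic_root[OF s _ disc] \<beta> unfolding u_def by auto
  have vu: "v \<le> u" by (rule cubic_root_ge_negative_point[OF s u23 root neg])
  show ?thesis
  proof (rule that)
    show "h_fun lam a x = u - a"
      unfolding h_fun_def phi_ang_def u_def s_def \<beta>_def using x0 by (simp add: algebra_simps)
    show "u \<ge> a" using vu v by simp
    have "v\<^sup>2 \<le> u\<^sup>2" using vu v a by (intro power_mono) auto
    thus "u\<^sup>2 \<ge> 2 * lam * (a + 1)" using v by simp
    have "u\<^sup>2 * (u - s + \<beta> / u\<^sup>2) = 0"
      using root vu v a by (simp add: power2_eq_square power3_eq_cube field_simps)
    thus "x = (u - a) + lam * (a + 1) * a / u\<^sup>2" using vu v a unfolding s_def \<beta>_def by simp
  qed
qed

lemma rho_prox_objective_diff: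
  assumes u: "u > 0" and a: "a > 0" and y: "y \<ge> 0" and x: "x = (u - a) + lam * (a + 1) * a / u\<^sup>2"
  shows "1/2 * (y - x)\<^sup>2 + lam * rho a y - (1/2 * ((u - a) - x)\<^sup>2 + lam * rho a (u - a))
     = (y - (u - a))\<^sup>2 * (1/2 - lam * (a + 1) * a / (u\<^sup>2 * (a + y)))"
proof -
  define z where "z = a + y"
  have z: "z \<noteq> 0" "y = z - a" using a y unfolding z_def by auto
  have r: "rho a (u - a) = (a + 1) * (u - a) / u" "rho a (z - a) = (a + 1) * (z - a) / z"
    unfolding rho_def by simp_all
  show ?thesis unfolding x z(2) r using u z(1) by (simp add: field_simps power2_eq_square)
qed

lemma h_fun_minimizes:
  assumes a: "a > 0" and l: "lam > 0" and x: "x > thr lam a" and y: "y \<ge> 0"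
  shows "1/2 * (h_fun lam a x - x)\<^sup>2 + lam * rho a (h_fun lam a x) \<le> 1/2 * (y - x)\<^sup>2 + lam * rho a y"
proof -
  obtain u where h: "h_fun lam a x = u - a" and ua: "u \<ge> a" and u2: "u\<^sup>2 \<ge> 2 * lam * (a + 1)"
    and xu: "x = (u - a) + lam * (a + 1) * a / u\<^sup>2"
    using h_fun_cubic_root[OF a l x] by blast
  have u: "u > 0" using ua a by simp
  have "2 * (lam * (a + 1) * a) \<le> u\<^sup>2 * a" using mult_right_mono[OF u2, of a] a by simp
  also have "\<dots> \<le> u\<^sup>2 * (a + y)" using y by (simp add: mult_left_mono)
  finally have "lam * (a + 1) * a / (u\<^sup>2 * (a + y)) \<le> 1/2" using u a y by (simp add: divide_le_eq)
  hence "0 \<le> (y - (u - a))\<^sup>2 * (1/2 - lam * (a + 1) * a / (u\<^sup>2 * (a + y)))" by simp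
  thus ?thesis using rho_prox_objective_diff[OF u a y xu] unfolding h by simp
qed

lemma g_fun_nonneg:
  assumes a: "a > 0" and l: "lam > 0" and x: "x \<ge> 0"
  shows "g_fun lam a x \<ge> 0"
proof (cases "x \<le> thr lam a")
  case False
  then obtain u where "h_fun lam a x = u - a" and "u \<ge> a"
    using h_fun_cubic_root[OF a l] by (metis not_le)
  thus ?thesis using False x by (simp add: g_fun_def)
qed (use x in \<open>simp add: g_fun_def\<close>)

lemma g_fun_minimizes:
  assumes a: "a > 0" and l: "lam > 0" and x: "x \<ge> 0" and y: "y \<ge> 0"
  shows "1/2 * (g_fun lam a x - x)\<^sup>2 + lam * rho a (g_fun lam a x) \<le> 1/2 * (y - x)\<^sup>2 + lam * rho a y"
proof (cases "x \<le> thr lam a")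
  case True
  thus ?thesis using zero_minimizes_below_thr[OF a l y True] x by (simp add: g_fun_def)
next
  case False
  thus ?thesis using h_fun_minimizes[OF a l _ y] x by (simp add: g_fun_def)
qed

section \<open>Orthogonal diagonalization of real symmetric matrices\<close>

lemma index_mult_mat_sum:
  assumes "A \<in> carrier_mat n k" "B \<in> carrier_mat k m" "i < n" "j < m"
  shows "(A * B) $$ (i, j) = (\<Sum>l<k. A $$ (i, l) * B $$ (l, j))"
  using assms by (simp add: scalar_prod_def atLeast0LessThan)

lemma index_mult_mat_vec_sum:
  assumes "A \<in> carrier_mat n k" "v \<in> carrier_vec k" "i < n"
  shows "(A *\<^sub>v v) $ i = (\<Sum>l<k. A $$ (i, l) * v $ l)"
  using assms by (simp add: scalar_prod_def atLeast0LessThan)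

lemma assoc_mult_mat_dims:
  fixes A B C :: "'a :: semiring_0 mat"
  assumes "dim_col A = dim_row B" "dim_col B = dim_row C"
  shows "A * B * C = A * (B * C)"
  using assms by (intro assoc_mult_mat[of _ "dim_row A" "dim_col A" _ "dim_col B" _ "dim_col C"])
    (auto intro: carrier_matI)

lemma mult_left_inverse_cancel:
  fixes A B X :: "'a :: semiring_1 mat"
  assumes "B * A = 1\<^sub>m k" "dim_col B = dim_row A" "dim_col A = dim_row X" "dim_row X = k"
  shows "B * (A * X) = X"
  using assms by (metis assoc_mult_mat_dims carrier_matI left_mult_one_mat)

lemma transpose_symmetric_entry:
  assumes "M \<in> carrier_mat n n" "transpose_mat M = M" "i < n" "j < n"
  shows "M $$ (i, j) = M $$ (j, i)"
  using assms by (metis index_transpose_mat(1) carrier_matD)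

lemma real_symmetric_complex_eigenvalue_real:
  fixes B :: "real mat"
  assumes B: "B \<in> carrier_mat p p" and sym: "\<And>i j. i < p \<Longrightarrow> j < p \<Longrightarrow> B $$ (i, j) = B $$ (j, i)"
    and u: "u \<in> carrier_vec p" "u \<noteq> 0\<^sub>v p" and eq: "map_mat complex_of_real B *\<^sub>v u = z \<cdot>\<^sub>v u"
  shows "cnj z = z"
proof -
  have ent: "(\<Sum>j<p. complex_of_real (B $$ (i, j)) * u $ j) = z * u $ i" if i: "i < p" for i
  proof -
    have "(map_mat complex_of_real B *\<^sub>v u) $ i = z * u $ i" using eq i u by simp
    thus ?thesis using index_mult_mat_vec_sum[of "map_mat complex_of_real B" p p u i] B u i by simp
  qed
  define S where "S = (\<Sum>i<p. cnj (u $ i) * (\<Sum>j<p. complex_of_real (B $$ (i, j)) * u $ j))"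
  define N where "N = (\<Sum>i<p. cnj (u $ i) * u $ i)"
  have SN: "S = z * N" unfolding S_def N_def using ent by (simp add: sum_distrib_left algebra_simps)
  have "cnj S = (\<Sum>i<p. \<Sum>j<p. u $ i * complex_of_real (B $$ (i, j)) * cnj (u $ j))"
    unfolding S_def by (simp add: sum_distrib_left algebra_simps)
  also have "\<dots> = (\<Sum>j<p. \<Sum>i<p. u $ i * complex_of_real (B $$ (i, j)) * cnj (u $ j))"
    by (rule sum.swap)
  also have "\<dots> = S" unfolding S_def using sym
    by (auto simp: sum_distrib_left algebra_simps intro!: sum.cong)
  finally have cS: "cnj S = S" .
  have Nr: "N = complex_of_real (\<Sum>i<p. (cmod (u $ i))\<^sup>2)"
    unfolding N_def of_real_sum
    by (rule sum.cong, simp_all add: complex_norm_square[symmetric] mult.commute del: of_real_power)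
  obtain i where i: "i < p" "u $ i \<noteq> 0" using u by (metis carrier_vecD eq_vecI index_zero_vec(1,2))
  have "(cmod (u $ i))\<^sup>2 \<le> (\<Sum>i<p. (cmod (u $ i))\<^sup>2)" by (rule member_le_sum) (use i in auto)
  moreover have "(cmod (u $ i))\<^sup>2 > 0" using i by simp
  ultimately have "N \<noteq> 0" "cnj N = N" unfolding Nr by (auto simp del: of_real_sum)
  thus ?thesis using cS SN by (metis complex_cnj_mult mult_cancel_right)
qed

lemma real_symmetric_eigenvector:
  fixes B :: "real mat"
  assumes B: "B \<in> carrier_mat p p" and p: "p > 0"
    and sym: "\<And>i j. i < p \<Longrightarrow> j < p \<Longrightarrow> B $$ (i, j) = B $$ (j, i)"
  obtains lam v where "v \<in> carrier_vec p" "v \<noteq> 0\<^sub>v p" "B *\<^sub>v v = lam \<cdot>\<^sub>v v"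
proof -
  define Bc where "Bc = map_mat complex_of_real B"
  have Bc: "Bc \<in> carrier_mat p p" using B Bc_def by simp
  have cp: "char_poly Bc = map_poly of_real (char_poly B)"
    unfolding Bc_def by (rule of_real_hom.char_poly_hom[OF B])
  have "degree (char_poly Bc) = p" using degree_monic_char_poly[OF Bc] by simp
  hence "\<not> constant (poly (char_poly Bc))" using p by (simp add: constant_degree)
  then obtain z where z: "poly (char_poly Bc) z = 0" using fundamental_theorem_of_algebra by blast
  hence "eigenvalue Bc z" using eigenvalue_root_char_poly[OF Bc] by simp
  then obtain u where "eigenvector Bc u z" unfolding eigenvalue_def by blast
  hence u: "u \<in> carrier_vec p" "u \<noteq> 0\<^sub>v p" and eq: "Bc *\<^sub>v u = z \<cdot>\<^sub>v u"
    unfolding eigenvector_def using Bc by auto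
  have "cnj z = z"
    using real_symmetric_complex_eigenvalue_real[OF B sym u eq[unfolded Bc_def]] by blast
  hence zr: "z = complex_of_real (Re z)" by (metis Reals_cnj_iff complex_is_Real_iff of_real_Re)
  have "complex_of_real (poly (char_poly B) (Re z)) = poly (char_poly Bc) z"
    unfolding cp by (subst zr, simp add: of_real_hom.poly_map_poly)
  hence "eigenvalue B (Re z)" using z eigenvalue_root_char_poly[OF B] by simp
  then obtain v where "eigenvector B v (Re z)" unfolding eigenvalue_def by blast
  thus ?thesis using that B unfolding eigenvector_def by auto
qed

definition householder_mat :: "nat \<Rightarrow> real \<Rightarrow> (nat \<Rightarrow> real) \<Rightarrow> real mat" where
  "householder_mat n c w = mat n n (\<lambda>(i, j). (if i = j then 1 else 0) - c * w i * w j)"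

lemma householder_mat_carrier: "householder_mat n c w \<in> carrier_mat n n"
  unfolding householder_mat_def by simp

lemma householder_mat_entry:
  "i < n \<Longrightarrow> j < n \<Longrightarrow> householder_mat n c w $$ (i, j) = (if i = j then 1 else 0) - c * w i * w j"
  unfolding householder_mat_def by simp

lemma householder_mat_symmetric: "transpose_mat (householder_mat n c w) = householder_mat n c w"
  by (rule eq_matI) (auto simp: householder_mat_def)

lemma householder_mat_involution:
  assumes c: "c\<^sup>2 * (\<Sum>l<n. (w l)\<^sup>2) = 2 * c"
  shows "householder_mat n c w * householder_mat n c w = 1\<^sub>m n"
proof (rule eq_matI)
  fix i j assume "i < dim_row (1\<^sub>m n)" "j < dim_col (1\<^sub>m n)"
  hence i: "i < n" and j: "j < n" by auto
  let ?D = "\<lambda>i j. if i = j then 1 else (0::real)"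
  have D1: "(\<Sum>l<n. ?D i l * f l) = f i" for f
  proof -
    have "(\<Sum>l<n. ?D i l * f l) = (\<Sum>l<n. if i = l then f l else 0)" by (intro sum.cong) auto
    thus ?thesis using i by simp
  qed
  have D2: "(\<Sum>l<n. f l * ?D l j) = f j" for f
  proof -
    have "(\<Sum>l<n. f l * ?D l j) = (\<Sum>l<n. if l = j then f l else 0)" by (intro sum.cong) auto
    thus ?thesis using j by simp
  qed
  have "(householder_mat n c w * householder_mat n c w) $$ (i, j)
      = (\<Sum>l<n. (?D i l - c * w i * w l) * (?D l j - c * w l * w j))"
    using index_mult_mat_sum[OF householder_mat_carrier householder_mat_carrier i j]
    by (simp add: householder_mat_entry i j)
  also have "\<dots> = (\<Sum>l<n. ?D i l * ?D l j) - c * w i * (\<Sum>l<n. w l * ?D l j)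
       - c * w j * (\<Sum>l<n. ?D i l * w l) + c\<^sup>2 * w i * w j * (\<Sum>l<n. (w l)\<^sup>2)"
    by (simp add: algebra_simps sum.distrib sum_subtractf sum_distrib_left power2_eq_square)
  also have "\<dots> = ?D i j - 2 * c * w i * w j + c\<^sup>2 * (\<Sum>l<n. (w l)\<^sup>2) * w i * w j"
    using D1[of "\<lambda>l. ?D l j"] D1[of w] D2[of w] by (simp add: algebra_simps)
  also have "\<dots> = 1\<^sub>m n $$ (i, j)" unfolding c using i j by simp
  finally show "(householder_mat n c w * householder_mat n c w) $$ (i, j) = 1\<^sub>m n $$ (i, j)" .
qed (auto simp: householder_mat_def)

text \<open>The reflection exchanging the unit vectors \<open>e\<close> and \<open>e\<^sub>k\<close>; when \<open>e = e\<^sub>k\<close> the formula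
  degenerates (\<open>c = 0\<close>) to the identity.\<close>

lemma householder_reflection:
  fixes e :: "nat \<Rightarrow> real"
  assumes k: "k < n" and e1: "(\<Sum>i<n. (e i)\<^sup>2) = 1"
  obtains H where "H \<in> carrier_mat n n" "transpose_mat H = H" "H * H = 1\<^sub>m n"
    "\<And>i. i < n \<Longrightarrow> H $$ (i, k) = e i"
    "\<And>i j. i < n \<Longrightarrow> j < n \<Longrightarrow> e i = 0 \<Longrightarrow> i \<noteq> k \<Longrightarrow> H $$ (i, j) = (if i = j then 1 else 0)"
proof -
  define w where "w = (\<lambda>i. e i - (if i = k then 1 else 0))"
  define ww where "ww = (\<Sum>l<n. (w l)\<^sup>2)"
  define c where "c = (if ww = 0 then 0 else 2 / ww)"
  define H where "H = householder_mat n c w"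
  have Hij: "H $$ (i, j) = (if i = j then 1 else 0) - c * w i * w j" if "i < n" "j < n" for i j
    unfolding H_def using that by (rule householder_mat_entry)
  have "ww = (\<Sum>l<n. (e l)\<^sup>2 - 2 * (if l = k then e l else 0) + (if l = k then 1 else 0))"
    unfolding ww_def w_def by (intro sum.cong) (auto simp: power2_eq_square algebra_simps)
  also have "\<dots> = (\<Sum>l<n. (e l)\<^sup>2) - 2 * (\<Sum>l<n. if l = k then e l else 0) + (\<Sum>l<n. if l = k then 1 else 0)"
    by (simp only: sum.distrib sum_subtractf sum_distrib_left)
  finally have wwe: "ww = 2 - 2 * e k" using e1 k by simp
  have col: "H $$ (i, k) = e i" if i: "i < n" for i
  proof (cases "ww = 0")
    case True
    have "(w i)\<^sup>2 \<le> ww" unfolding ww_def by (rule member_le_sum) (use i in auto)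
    hence "w i = 0" using True by simp
    thus ?thesis using Hij[OF i k] True unfolding c_def w_def by simp
  next
    case False
    have "c * w k = -1" unfolding c_def w_def using False wwe by (simp add: field_simps)
    hence "c * w i * w k = - w i" by (metis mult.assoc mult.commute mult_minus1_right)
    hence "H $$ (i, k) = (if i = k then 1 else 0) + w i" using Hij[OF i k] by simp
    thus ?thesis unfolding w_def by simp
  qed
  have "c\<^sup>2 * ww = 2 * c" unfolding c_def by (simp add: power2_eq_square)
  hence "H * H = 1\<^sub>m n" unfolding H_def ww_def by (rule householder_mat_involution)
  moreover have "H $$ (i, j) = (if i = j then 1 else 0)" if "i < n" "j < n" "e i = 0" "i \<noteq> k" for i j
    using Hij that unfolding w_def by simp
  ultimately show ?thesis
    using that householder_mat_carrier householder_mat_symmetric col unfolding H_def by blast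
qed

definition diag_upto :: "nat \<Rightarrow> nat \<Rightarrow> real mat \<Rightarrow> bool" where
  "diag_upto n k M \<longleftrightarrow> (\<forall>i<n. \<forall>j<n. i \<noteq> j \<and> (i < k \<or> j < k) \<longrightarrow> M $$ (i, j) = 0)"

lemma diag_upto_symmetric:
  assumes "M \<in> carrier_mat n n" "transpose_mat M = M"
    and "\<And>i j. i < k \<Longrightarrow> j < n \<Longrightarrow> i \<noteq> j \<Longrightarrow> M $$ (i, j) = 0"
  shows "diag_upto n k M"
  unfolding diag_upto_def using assms transpose_symmetric_entry[OF assms(1,2)] by metis

lemma sum_lessThan_split:
  fixes f :: "nat \<Rightarrow> 'a :: comm_monoid_add"
  assumes "k \<le> n"
  shows "(\<Sum>i<n. f i) = (\<Sum>i<k. f i) + (\<Sum>l<n - k. f (l + k))"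
proof -
  have "(\<Sum>i<n. f i) = (\<Sum>i<k. f i) + (\<Sum>i\<in>{k..<n}. f i)"
    using assms by (metis lessThan_atLeast0 sum.atLeastLessThan_concat zero_le)
  also have "(\<Sum>i\<in>{k..<n}. f i) = (\<Sum>l<n - k. f (l + k))"
    using sum.shift_bounds_nat_ivl[of f 0 k "n - k"] assms by (simp add: lessThan_atLeast0 add.commute)
  finally show ?thesis .
qed

text \<open>An eigenvector of the lower right block of \<open>M\<close> yields one of \<open>M\<close>, since the first \<open>k\<close>
  rows and columns of \<open>M\<close> are already diagonal.\<close>

lemma symmetric_tail_eigenvector:
  fixes M :: "real mat"
  assumes M: "M \<in> carrier_mat n n" and sym: "transpose_mat M = M" and k: "k < n"
    and dk: "diag_upto n k M"
  obtains lam e where "(\<Sum>i<n. (e i)\<^sup>2) = 1" "\<And>i. i < k \<Longrightarrow> e i = 0"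
    "\<And>i. i < n \<Longrightarrow> (\<Sum>j<n. M $$ (i, j) * e j) = lam * e i"
proof -
  define p where "p = n - k"
  have p0: "p > 0" and np: "n = p + k" using k unfolding p_def by auto
  define B where "B = mat p p (\<lambda>(i, j). M $$ (i + k, j + k))"
  have Bc: "B \<in> carrier_mat p p" unfolding B_def by simp
  have Bsym: "B $$ (i, j) = B $$ (j, i)" if "i < p" "j < p" for i j
    unfolding B_def using that transpose_symmetric_entry[OF M sym, of "i + k" "j + k"] np by simp
  obtain lam v where vc: "v \<in> carrier_vec p" and v0: "v \<noteq> 0\<^sub>v p" and ev: "B *\<^sub>v v = lam \<cdot>\<^sub>v v"
    using real_symmetric_eigenvector[OF Bc p0 Bsym] by blast
  define nv where "nv = (\<Sum>l<p. (v $ l)\<^sup>2)"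
  obtain i0 where i0: "i0 < p" "v $ i0 \<noteq> 0" using v0 vc by (metis carrier_vecD eq_vecI index_zero_vec(1,2))
  have "(v $ i0)\<^sup>2 \<le> nv" unfolding nv_def by (rule member_le_sum) (use i0 in auto)
  hence nv0: "nv > 0" using i0 by (metis less_le_trans zero_less_power2)
  define e where "e = (\<lambda>i. if k \<le> i then v $ (i - k) / sqrt nv else 0)"
  have split: "(\<Sum>i<n. f i) = (\<Sum>i<k. f i) + (\<Sum>l<p. f (l + k))" for f :: "nat \<Rightarrow> real"
    unfolding p_def using k by (intro sum_lessThan_split) simp
  have e0: "e i = 0" if "i < k" for i using that e_def by simp
  show ?thesis
  proof (rule that)
    have "(\<Sum>i<n. (e i)\<^sup>2) = (\<Sum>l<p. (v $ l)\<^sup>2 / nv)"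
      unfolding split e_def using nv0 by (simp add: power_divide)
    also have "\<dots> = 1" unfolding nv_def[symmetric] sum_divide_distrib[symmetric] using nv0 by simp
    finally show "(\<Sum>i<n. (e i)\<^sup>2) = 1" .
    show "e i = 0" if "i < k" for i using that by (rule e0)
    show "(\<Sum>j<n. M $$ (i, j) * e j) = lam * e i" if i: "i < n" for i
    proof (cases "i < k")
      case True
      have "M $$ (i, j) * e j = 0" if "j < n" for j
        using dk e0 i that True unfolding diag_upto_def by (cases "j < k") auto
      thus ?thesis using e0 True by (simp add: sum.neutral)
    next
      case False
      define i' where "i' = i - k"
      have i': "i' < p" "i = i' + k" using False i np i'_def by auto
      have "(\<Sum>j<n. M $$ (i, j) * e j) = (\<Sum>l<p. B $$ (i', l) * v $ l) / sqrt nv"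
        unfolding split sum_divide_distrib using e0 i' by (simp add: e_def B_def)
      also have "(\<Sum>l<p. B $$ (i', l) * v $ l) = lam * v $ i'"
        using index_mult_mat_vec_sum[OF Bc vc i'(1)] ev vc i' by simp
      finally show ?thesis using i' by (simp add: e_def)
    qed
  qed
qed

text \<open>One deflation step: the Householder reflection mapping \<open>e\<^sub>k\<close> to a unit eigenvector
  supported on the indices \<open>\<ge> k\<close> fixes \<open>e\<^sub>0, \<dots>, e\<^sub>k\<^sub>-\<^sub>1\<close> and diagonalizes row \<open>k\<close>.\<close>

lemma diag_upto_Suc_reflection:
  fixes M :: "real mat"
  assumes M: "M \<in> carrier_mat n n" and sym: "transpose_mat M = M" and k: "k < n"
    and dk: "diag_upto n k M"
  obtains H where "H \<in> carrier_mat n n" "transpose_mat H = H" "H * H = 1\<^sub>m n"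
    "diag_upto n (Suc k) (H * M * H)"
proof -
  obtain e lam where e1: "(\<Sum>i<n. (e i)\<^sup>2) = 1" and e0: "\<And>i. i < k \<Longrightarrow> e i = 0"
    and eig: "\<And>i. i < n \<Longrightarrow> (\<Sum>j<n. M $$ (i, j) * e j) = lam * e i"
    using symmetric_tail_eigenvector[OF M sym k dk] by metis
  obtain H where Hc: "H \<in> carrier_mat n n" and HT: "transpose_mat H = H" and HH: "H * H = 1\<^sub>m n"
    and Hk: "\<And>i. i < n \<Longrightarrow> H $$ (i, k) = e i"
    and Hfix: "\<And>i j. i < n \<Longrightarrow> j < n \<Longrightarrow> e i = 0 \<Longrightarrow> i \<noteq> k \<Longrightarrow> H $$ (i, j) = (if i = j then 1 else 0)"
    using householder_reflection[OF k e1] by metis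
  have Hs: "H $$ (i, j) = H $$ (j, i)" if "i < n" "j < n" for i j
    using transpose_symmetric_entry[OF Hc HT that] .
  have Ms: "M $$ (i, j) = M $$ (j, i)" if "i < n" "j < n" for i j
    using transpose_symmetric_entry[OF M sym that] .
  have HMc: "H * M \<in> carrier_mat n n" using Hc M by simp
  have HMH: "(H * M * H) $$ (i, j) = (\<Sum>b<n. (\<Sum>a<n. H $$ (i, a) * M $$ (a, b)) * H $$ (b, j))"
    if "i < n" "j < n" for i j
    using index_mult_mat_sum[OF HMc Hc that] index_mult_mat_sum[OF Hc M that(1)] by simp
  have row_lt: "(H * M * H) $$ (i, j) = 0" if i: "i < k" and j: "j < n" and ij: "i \<noteq> j" for i j
  proof -
    have i': "i < n" using i k by simp
    have "(\<Sum>a<n. H $$ (i, a) * M $$ (a, b)) = M $$ (i, b)" if "b < n" for b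
    proof -
      have "(\<Sum>a<n. H $$ (i, a) * M $$ (a, b)) = (\<Sum>a<n. if i = a then M $$ (a, b) else 0)"
        using Hfix e0[OF i] i i' by (intro sum.cong) auto
      thus ?thesis using i' by simp
    qed
    hence "(H * M * H) $$ (i, j) = (\<Sum>b<n. M $$ (i, b) * H $$ (b, j))" using HMH[OF i' j] by simp
    also have "\<dots> = (\<Sum>b<n. if b = i then M $$ (i, i) * H $$ (i, j) else 0)"
      using dk i i' unfolding diag_upto_def by (intro sum.cong) auto
    also have "\<dots> = 0" using Hfix[of i j] e0[OF i] i i' j ij by simp
    finally show ?thesis .
  qed
  have row_k: "(H * M * H) $$ (k, j) = 0" if j: "j < n" and kj: "k \<noteq> j" for j
  proof -
    have "(\<Sum>a<n. H $$ (k, a) * M $$ (a, b)) = lam * e b" if b: "b < n" for b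
    proof -
      have "(\<Sum>a<n. H $$ (k, a) * M $$ (a, b)) = (\<Sum>a<n. M $$ (b, a) * e a)"
        using Hk Hs Ms b k by (intro sum.cong) (auto simp: mult.commute)
      thus ?thesis using eig[OF b] by simp
    qed
    hence "(H * M * H) $$ (k, j) = (\<Sum>b<n. lam * e b * H $$ (b, j))" using HMH[OF k j] by simp
    also have "\<dots> = lam * (\<Sum>b<n. H $$ (k, b) * H $$ (b, j))"
      unfolding sum_distrib_left using Hk Hs k by (intro sum.cong) (auto simp: mult.assoc)
    also have "(\<Sum>b<n. H $$ (k, b) * H $$ (b, j)) = (H * H) $$ (k, j)"
      using index_mult_mat_sum[OF Hc Hc k j] by simp
    also have "\<dots> = 0" using HH k j kj by simp
    finally show ?thesis by simp
  qed
  have "transpose_mat (H * M * H) = H * (M * H)"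
    using transpose_mult[OF HMc Hc] transpose_mult[OF Hc M] by (simp add: HT sym)
  hence "transpose_mat (H * M * H) = H * M * H" using Hc M by simp
  hence "diag_upto n (Suc k) (H * M * H)"
    using row_lt row_k by (intro diag_upto_symmetric[OF mult_carrier_mat[OF HMc Hc]]) (auto simp: less_Suc_eq)
  thus ?thesis using that Hc HT HH by blast
qed

definition real_orthogonal :: "nat \<Rightarrow> real mat \<Rightarrow> bool" where
  "real_orthogonal n W \<longleftrightarrow>
    W \<in> carrier_mat n n \<and> W * transpose_mat W = 1\<^sub>m n \<and> transpose_mat W * W = 1\<^sub>m n"

lemma real_orthogonal_one: "real_orthogonal n (1\<^sub>m n)"
  unfolding real_orthogonal_def by simp

lemma real_orthogonal_mult:
  assumes A: "real_orthogonal n A" and B: "real_orthogonal n B"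
  shows "real_orthogonal n (A * B)"
proof -
  have Ac: "A \<in> carrier_mat n n" and Bc: "B \<in> carrier_mat n n"
    using A B unfolding real_orthogonal_def by auto
  have T: "transpose_mat (A * B) = transpose_mat B * transpose_mat A" by (rule transpose_mult[OF Ac Bc])
  have "A * B * (transpose_mat B * transpose_mat A) = A * (B * transpose_mat B) * transpose_mat A"
    using Ac Bc by (simp add: assoc_mult_mat_dims)
  moreover have "transpose_mat B * transpose_mat A * (A * B) = transpose_mat B * (transpose_mat A * A) * B"
    using Ac Bc by (simp add: assoc_mult_mat_dims)
  ultimately show ?thesis using A B Ac Bc unfolding real_orthogonal_def T by simp
qed

lemma diagonal_mat_of_diag_upto: "M \<in> carrier_mat n n \<Longrightarrow> diag_upto n n M \<Longrightarrow> diagonal_mat M"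
  unfolding diag_upto_def diagonal_mat_def by auto

theorem real_symmetric_orthogonal_diagonalization:
  fixes A :: "real mat"
  assumes A: "A \<in> carrier_mat n n" and sym: "transpose_mat A = A"
  obtains W where "real_orthogonal n W" "diagonal_mat (transpose_mat W * A * W)"
proof -
  have "\<exists>W. real_orthogonal n W \<and> diag_upto n k (transpose_mat W * A * W)" if "k \<le> n" for k
    using that
  proof (induction k)
    case 0
    show ?case using A by (intro exI[of _ "1\<^sub>m n"]) (auto simp: real_orthogonal_one diag_upto_def)
  next
    case (Suc k)
    then obtain W where W: "real_orthogonal n W" and dk: "diag_upto n k (transpose_mat W * A * W)"
      by auto
    have Wc: "W \<in> carrier_mat n n" using W unfolding real_orthogonal_def by simp
    define M where "M = transpose_mat W * A * W"
    have Mc: "M \<in> carrier_mat n n" unfolding M_def using Wc A by simp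
    have "transpose_mat M = transpose_mat W * (transpose_mat A * W)"
      unfolding M_def using Wc A by (simp add: transpose_mult[of _ n n _ n])
    hence MT: "transpose_mat M = M" unfolding M_def sym using Wc A by simp
    obtain H where Hc: "H \<in> carrier_mat n n" and HT: "transpose_mat H = H" and HH: "H * H = 1\<^sub>m n"
      and dk1: "diag_upto n (Suc k) (H * M * H)"
      using diag_upto_Suc_reflection[OF Mc MT _ dk[folded M_def]] Suc.prems by (metis Suc_le_eq)
    have "real_orthogonal n H" unfolding real_orthogonal_def using Hc HT HH by simp
    moreover have "transpose_mat (W * H) * A * (W * H) = H * M * H"
      unfolding M_def using Wc Hc A by (simp add: transpose_mult[OF Wc Hc] HT assoc_mult_mat_dims)
    ultimately show ?case using W dk1 real_orthogonal_mult by metis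
  qed
  then obtain W where "real_orthogonal n W" "diag_upto n n (transpose_mat W * A * W)" by blast
  moreover have "transpose_mat W * A * W \<in> carrier_mat n n"
    using \<open>real_orthogonal n W\<close> A unfolding real_orthogonal_def by (meson mult_carrier_mat transpose_carrier_mat)
  ultimately show ?thesis using that diagonal_mat_of_diag_upto by blast
qed

section \<open>Frobenius norm and singular values\<close>

definition mat_trace :: "real mat \<Rightarrow> real" where
  "mat_trace A = (\<Sum>i<dim_row A. A $$ (i, i))"

lemma mat_trace_mult_comm:
  assumes A: "A \<in> carrier_mat m n" and B: "B \<in> carrier_mat n m"
  shows "mat_trace (A * B) = mat_trace (B * A)"
proof -
  have "mat_trace (A * B) = (\<Sum>i<m. \<Sum>l<n. A $$ (i, l) * B $$ (l, i))"
    unfolding mat_trace_def using A B index_mult_mat_sum[OF A B] by simp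
  also have "\<dots> = (\<Sum>l<n. \<Sum>i<m. B $$ (l, i) * A $$ (i, l))"
    by (subst sum.swap) (simp add: mult.commute)
  also have "\<dots> = mat_trace (B * A)"
    unfolding mat_trace_def using A B index_mult_mat_sum[OF B A] by simp
  finally show ?thesis .
qed

lemma frob_norm_sq: "(frob_norm M)\<^sup>2 = (\<Sum>i<dim_row M. \<Sum>j<dim_col M. (M $$ (i, j))\<^sup>2)"
  unfolding frob_norm_def by (simp add: sum_nonneg)

lemma frob_norm_nonneg: "frob_norm M \<ge> 0"
  unfolding frob_norm_def by (simp add: sum_nonneg)

lemma frob_norm_sq_trace:
  assumes M: "M \<in> carrier_mat m n"
  shows "(frob_norm M)\<^sup>2 = mat_trace (M * transpose_mat M)"
  unfolding frob_norm_sq mat_trace_def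
  using M index_mult_mat_sum[of M m n "transpose_mat M" m] by (simp add: power2_eq_square)

lemma gram_orthogonal_conj:
  assumes U: "real_orthogonal m U" and V: "real_orthogonal n V" and M: "M \<in> carrier_mat m n"
  shows "U * M * transpose_mat V * transpose_mat (U * M * transpose_mat V)
    = U * (M * transpose_mat M) * transpose_mat U"
proof -
  have Uc: "U \<in> carrier_mat m m" and Vc: "V \<in> carrier_mat n n" and V1: "transpose_mat V * V = 1\<^sub>m n"
    using U V unfolding real_orthogonal_def by auto
  have UM: "U * M \<in> carrier_mat m n" using Uc M by simp
  have "transpose_mat (U * M * transpose_mat V) = V * (transpose_mat M * transpose_mat U)"
    using transpose_mult[OF UM transpose_carrier_mat[THEN iffD2, OF Vc]] transpose_mult[OF Uc M] Vc
    by simp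
  hence "U * M * transpose_mat V * transpose_mat (U * M * transpose_mat V)
      = U * (M * (transpose_mat V * (V * (transpose_mat M * transpose_mat U))))"
    using Uc Vc M by (simp add: assoc_mult_mat_dims)
  also have "\<dots> = U * (M * transpose_mat M) * transpose_mat U"
    using Uc Vc M V1 by (simp add: mult_left_inverse_cancel assoc_mult_mat_dims)
  finally show ?thesis .
qed

lemma frob_norm_orthogonal_invariant:
  assumes U: "real_orthogonal m U" and V: "real_orthogonal n V" and M: "M \<in> carrier_mat m n"
  shows "frob_norm (U * M * transpose_mat V) = frob_norm M"
proof -
  have Uc: "U \<in> carrier_mat m m" and U1: "transpose_mat U * U = 1\<^sub>m m"
    and Vc: "V \<in> carrier_mat n n" using U V unfolding real_orthogonal_def by auto
  have MM: "M * transpose_mat M \<in> carrier_mat m m" using M by simp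
  have "(frob_norm (U * M * transpose_mat V))\<^sup>2 = mat_trace (U * (M * transpose_mat M) * transpose_mat U)"
    using frob_norm_sq_trace[of "U * M * transpose_mat V" m n] gram_orthogonal_conj[OF U V M] Uc Vc M
    by simp
  also have "\<dots> = mat_trace (M * transpose_mat M * transpose_mat U * U)"
    using mat_trace_mult_comm[of U m m "M * transpose_mat M * transpose_mat U"] Uc MM
    by (simp add: assoc_mult_mat_dims)
  also have "\<dots> = (frob_norm M)\<^sup>2"
    using U1 Uc MM frob_norm_sq_trace[OF M] right_mult_one_mat[OF MM] by (simp add: assoc_mult_mat_dims)
  finally show ?thesis by (simp add: power2_eq_iff_nonneg frob_norm_nonneg)
qed

lemma proots_prod_linear_factors: "proots (\<Prod>a\<leftarrow>xs. [:- a, 1:]) = mset (xs :: real list)"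
proof (induction xs)
  case (Cons a xs)
  have "(\<Prod>a\<leftarrow>xs. [:- a, 1:]) \<noteq> (0 :: real poly)" by (auto simp: prod_list_zero_iff)
  hence "proots ([:- a, 1:] * (\<Prod>a\<leftarrow>xs. [:- a, 1:])) = proots [:- a, 1:] + proots (\<Prod>a\<leftarrow>xs. [:- a, 1:])"
    by (intro proots_mult) simp_all
  also have "proots [:- a, 1:] = {#a#}" using proots_linear_factor[of "-a"] by simp
  finally show ?case using Cons by simp
qed simp

lemma singular_values_orthogonal_invariant:
  assumes U: "real_orthogonal m U" and V: "real_orthogonal n V" and M: "M \<in> carrier_mat m n"
  shows "singular_values (U * M * transpose_mat V) = singular_values M"
proof -
  have Uc: "U \<in> carrier_mat m m" and U1: "U * transpose_mat U = 1\<^sub>m m"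
    and U2: "transpose_mat U * U = 1\<^sub>m m" using U unfolding real_orthogonal_def by auto
  have MM: "M * transpose_mat M \<in> carrier_mat m m" using M by simp
  have "similar_mat (U * (M * transpose_mat M) * transpose_mat U) (M * transpose_mat M)"
    unfolding similar_mat_def similar_mat_wit_def
    by (rule exI[of _ U], rule exI[of _ "transpose_mat U"]) (use Uc MM U1 U2 in \<open>simp add: Let_def\<close>)
  thus ?thesis
    unfolding singular_values_def gram_orthogonal_conj[OF U V M] by (simp add: char_poly_similar)
qed

lemma singular_values_orthogonal_rows:
  assumes B: "B \<in> carrier_mat m n" and d: "diagonal_mat (B * transpose_mat B)"
  shows "singular_values B = mset (map (\<lambda>j. sqrt (\<Sum>l<n. (B $$ (j, l))\<^sup>2)) [0..<m])"
proof -
  define L where "L = B * transpose_mat B"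
  have Lc: "L \<in> carrier_mat m m" unfolding L_def using B by simp
  have Ljj: "L $$ (j, j) = (\<Sum>l<n. (B $$ (j, l))\<^sup>2)" if "j < m" for j
    unfolding L_def using index_mult_mat_sum[of B m n "transpose_mat B" m j j] B that
    by (simp add: power2_eq_square)
  have "upper_triangular L" using d Lc unfolding upper_triangular_def diagonal_mat_def L_def by auto
  hence "char_poly L = (\<Prod>a\<leftarrow>diag_mat L. [:- a, 1:])" by (rule char_poly_upper_triangular[OF Lc])
  hence "singular_values B = mset (map sqrt (diag_mat L))"
    unfolding singular_values_def L_def[symmetric] by (simp add: proots_prod_linear_factors)
  also have "map sqrt (diag_mat L) = map (\<lambda>j. sqrt (\<Sum>l<n. (B $$ (j, l))\<^sup>2)) [0..<m]"
    unfolding diag_mat_def using Lc Ljj by simp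
  finally show ?thesis .
qed

lemma TS1_eq_sum_mset:
  assumes "\<And>s. s \<in># singular_values M \<Longrightarrow> s \<ge> 0"
  shows "TS1 a M = (\<Sum>s\<in>#singular_values M. rho a s)"
proof -
  let ?S = "singular_values M"
  have "\<forall>s\<in>#filter_mset (\<lambda>s. \<not> s > 0) ?S. rho a s = 0"
    using assms by force
  hence "(\<Sum>s\<in>#filter_mset (\<lambda>s. \<not> s > 0) ?S. rho a s) = 0"
    by (simp add: sum_mset.neutral)
  thus ?thesis unfolding TS1_def
    by (metis (no_types) add.right_neutral image_mset_union multiset_partition sum_mset.union)
qed

section \<open>A trace inequality\<close>

text \<open>Bessel's inequality for the standard basis vector \<open>e\<^sub>l\<close> and the nonzero rows of \<open>Q\<close>.\<close>

lemma orthonormal_rows_column_bound: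
  fixes Q :: "nat \<Rightarrow> nat \<Rightarrow> real"
  assumes orth: "\<And>j k. j < m \<Longrightarrow> k < m \<Longrightarrow> j \<noteq> k \<Longrightarrow> (\<Sum>l<n. Q j l * Q k l) = 0"
    and norm: "\<And>j. j < m \<Longrightarrow> (\<Sum>l<n. (Q j l)\<^sup>2) = 0 \<or> (\<Sum>l<n. (Q j l)\<^sup>2) = 1"
    and l: "l < n"
  shows "(\<Sum>j<m. (Q j l)\<^sup>2) \<le> 1"
proof -
  define t where "t = (\<Sum>j<m. (Q j l)\<^sup>2)"
  have t0: "t \<ge> 0" unfolding t_def by (simp add: sum_nonneg)
  have zero_row: "Q j l = 0" if "j < m" "(\<Sum>l<n. (Q j l)\<^sup>2) = 0" for j
    using that l by (simp add: sum_nonneg_eq_0_iff)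
  have inner: "Q j l * Q k l * (\<Sum>l'<n. Q j l' * Q k l') = (if j = k then (Q j l)\<^sup>2 else 0)"
    if "j < m" "k < m" for j k
    using that orth[of j k] norm[of j] zero_row[of j] by (auto simp: power2_eq_square)
  have "(\<Sum>l'<n. (\<Sum>j<m. Q j l * Q j l')\<^sup>2) = (\<Sum>j<m. \<Sum>k<m. Q j l * Q k l * (\<Sum>l'<n. Q j l' * Q k l'))"
    by (simp add: power2_eq_square sum_product sum_distrib_left mult_ac sum.swap[of _ "{..<n}"])
  also have "\<dots> = t"
    unfolding t_def by (intro sum.cong refl) (simp add: inner if_distrib sum.delta cong: if_cong)
  finally have key: "(\<Sum>l'<n. (\<Sum>j<m. Q j l * Q j l')\<^sup>2) = t" .
  have "t\<^sup>2 = (\<Sum>j<m. Q j l * Q j l)\<^sup>2" unfolding t_def by (simp add: power2_eq_square)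
  also have "\<dots> \<le> (\<Sum>l'<n. (\<Sum>j<m. Q j l * Q j l')\<^sup>2)"
    by (rule member_le_sum[where f = "\<lambda>l'. (\<Sum>j<m. Q j l * Q j l')\<^sup>2"]) (use l in auto)
  finally have "t * t \<le> t * 1" using key by (simp add: power2_eq_square)
  hence "t \<le> 1" using t0 by (cases "t = 0") (auto simp: mult_le_cancel_left)
  thus ?thesis unfolding t_def .
qed

lemma orthogonal_rows_normalization:
  fixes B :: "real mat"
  assumes B: "B \<in> carrier_mat m n" and d: "diagonal_mat (B * transpose_mat B)"
  obtains Q where "\<And>j l. j < m \<Longrightarrow> l < n \<Longrightarrow> B $$ (j, l) = sqrt (\<Sum>l<n. (B $$ (j, l))\<^sup>2) * Q j l"
    "\<And>j. j < m \<Longrightarrow> (\<Sum>l<n. (Q j l)\<^sup>2) \<le> 1" "\<And>l. l < n \<Longrightarrow> (\<Sum>j<m. (Q j l)\<^sup>2) \<le> 1"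
proof -
  define r where "r = (\<lambda>j. sqrt (\<Sum>l<n. (B $$ (j, l))\<^sup>2))"
  define Q where "Q = (\<lambda>j l. if r j = 0 then 0 else B $$ (j, l) / r j)"
  have r2: "(r j)\<^sup>2 = (\<Sum>l<n. (B $$ (j, l))\<^sup>2)" for j unfolding r_def by (simp add: sum_nonneg)
  have BQ: "B $$ (j, l) = r j * Q j l" if "l < n" for j l
  proof (cases "r j = 0")
    case True
    hence "(\<Sum>l<n. (B $$ (j, l))\<^sup>2) = 0" using r2[of j] by simp
    hence "B $$ (j, l) = 0" using that by (simp add: sum_nonneg_eq_0_iff)
    thus ?thesis unfolding Q_def using True by simp
  qed (simp add: Q_def)
  have Bjk: "(\<Sum>l<n. B $$ (j, l) * B $$ (k, l)) = 0" if "j < m" "k < m" "j \<noteq> k" for j k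
    using d that index_mult_mat_sum[of B m n "transpose_mat B" m j k] B
    unfolding diagonal_mat_def by simp
  have orth: "(\<Sum>l<n. Q j l * Q k l) = 0" if "j < m" "k < m" "j \<noteq> k" for j k
  proof (cases "r j = 0 \<or> r k = 0")
    case False
    hence "(\<Sum>l<n. Q j l * Q k l) = (\<Sum>l<n. B $$ (j, l) * B $$ (k, l) / (r j * r k))"
      by (intro sum.cong) (simp_all add: Q_def)
    thus ?thesis using Bjk[OF that] by (simp add: sum_divide_distrib[symmetric])
  qed (auto simp: Q_def)
  have norm: "(\<Sum>l<n. (Q j l)\<^sup>2) = (if r j = 0 then 0 else 1)" for j
    using r2[of j] by (auto simp: Q_def power_divide sum_divide_distrib[symmetric])
  show ?thesis
  proof (rule that)
    show "B $$ (j, l) = sqrt (\<Sum>l<n. (B $$ (j, l))\<^sup>2) * Q j l" if "j < m" "l < n" for j l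
      using BQ[OF that(2)] unfolding r_def .
    show "(\<Sum>l<n. (Q j l)\<^sup>2) \<le> 1" for j using norm[of j] by simp
    show "(\<Sum>j<m. (Q j l)\<^sup>2) \<le> 1" if "l < n" for l
      using orthonormal_rows_column_bound[OF orth _ that] norm by simp
  qed
qed

lemma real_orthogonal_row_norm:
  assumes W: "real_orthogonal m W" and i: "i < m"
  shows "(\<Sum>j<m. (W $$ (i, j))\<^sup>2) = 1"
proof -
  have Wc: "W \<in> carrier_mat m m" using W unfolding real_orthogonal_def by simp
  have "(\<Sum>j<m. (W $$ (i, j))\<^sup>2) = (\<Sum>j<m. W $$ (i, j) * transpose_mat W $$ (j, i))"
    using Wc i by (intro sum.cong) (auto simp: power2_eq_square)
  also have "\<dots> = (W * transpose_mat W) $$ (i, i)"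
    using index_mult_mat_sum[of W m m "transpose_mat W" m i i] Wc i by simp
  finally show ?thesis using W i unfolding real_orthogonal_def by simp
qed

lemma real_orthogonal_col_norm:
  assumes W: "real_orthogonal m W" and j: "j < m"
  shows "(\<Sum>i<m. (W $$ (i, j))\<^sup>2) = 1"
proof -
  have Wc: "W \<in> carrier_mat m m" using W unfolding real_orthogonal_def by simp
  have "(\<Sum>i<m. (W $$ (i, j))\<^sup>2) = (\<Sum>i<m. transpose_mat W $$ (j, i) * W $$ (i, j))"
    using Wc j by (intro sum.cong) (auto simp: power2_eq_square)
  also have "\<dots> = (transpose_mat W * W) $$ (j, j)"
    using index_mult_mat_sum[of "transpose_mat W" m m W m j j] Wc j by simp
  finally show ?thesis using W j unfolding real_orthogonal_def by simp
qed

lemma mult_le_by_amgm: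
  fixes x y w q P :: real
  assumes "x \<ge> 0" "y \<ge> 0" "x * y \<le> P"
  shows "x * w * y * q \<le> P * (w\<^sup>2 + q\<^sup>2) / 2"
proof -
  have "2 * (\<bar>w\<bar> * \<bar>q\<bar>) \<le> \<bar>w\<bar>\<^sup>2 + \<bar>q\<bar>\<^sup>2" using sum_squares_bound[of "\<bar>w\<bar>" "\<bar>q\<bar>"] by simp
  hence wq: "\<bar>w * q\<bar> \<le> (w\<^sup>2 + q\<^sup>2) / 2" by (simp add: abs_mult)
  have P0: "P \<ge> 0" using assms by (meson mult_nonneg_nonneg order_trans)
  have "x * w * y * q = (x * y) * (w * q)" by (simp add: algebra_simps)
  also have "\<dots> \<le> (x * y) * \<bar>w * q\<bar>" using assms by (intro mult_left_mono) auto
  also have "\<dots> \<le> P * \<bar>w * q\<bar>" using assms by (intro mult_right_mono) auto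
  also have "\<dots> \<le> P * ((w\<^sup>2 + q\<^sup>2) / 2)" using P0 wq by (intro mult_left_mono) auto
  finally show ?thesis by simp
qed

lemma sum_substochastic_weights_le:
  fixes \<psi> \<phi> :: "nat \<Rightarrow> real" and A :: "nat \<Rightarrow> nat \<Rightarrow> real"
  assumes \<psi>0: "\<And>i. i < m \<Longrightarrow> \<psi> i \<ge> 0" and \<phi>0: "\<And>j. j < m \<Longrightarrow> \<phi> j \<ge> 0"
    and rows: "\<And>i. i < m \<Longrightarrow> (\<Sum>j<m. A i j) \<le> 2" and cols: "\<And>j. j < m \<Longrightarrow> (\<Sum>i<m. A i j) \<le> 2"
  shows "(\<Sum>i<m. \<Sum>j<m. (\<psi> i + \<phi> j) * A i j / 2) \<le> (\<Sum>i<m. \<psi> i) + (\<Sum>j<m. \<phi> j)"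
proof -
  have "(\<Sum>i<m. \<Sum>j<m. (\<psi> i + \<phi> j) * A i j / 2)
      = (\<Sum>i<m. \<psi> i * ((\<Sum>j<m. A i j) / 2)) + (\<Sum>i<m. \<Sum>j<m. \<phi> j * A i j / 2)"
    by (simp add: distrib_right add_divide_distrib sum.distrib sum_distrib_left sum_divide_distrib mult.assoc)
  also have "(\<Sum>i<m. \<Sum>j<m. \<phi> j * A i j / 2) = (\<Sum>j<m. \<phi> j * ((\<Sum>i<m. A i j) / 2))"
    by (subst sum.swap) (simp add: sum_distrib_left sum_divide_distrib)
  also have "(\<Sum>i<m. \<psi> i * ((\<Sum>j<m. A i j) / 2)) \<le> (\<Sum>i<m. \<psi> i)"
    using rows \<psi>0 by (intro sum_mono mult_left_le) auto
  also have "(\<Sum>j<m. \<phi> j * ((\<Sum>i<m. A i j) / 2)) \<le> (\<Sum>j<m. \<phi> j)"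
    using cols \<phi>0 by (intro sum_mono mult_left_le) auto
  finally show ?thesis by simp
qed

text \<open>With \<open>Z = W B\<close> and \<open>B = r Q\<close> row by row, the weights \<open>(W\<^sub>i\<^sub>j\<^sup>2 + Q\<^sub>j\<^sub>i\<^sup>2)/2\<close> have row and
  column sums at most one; this replaces von Neumann's trace inequality.\<close>

lemma diag_sum_le_separable_bound:
  fixes W B :: "real mat" and \<sigma> \<psi> :: "nat \<Rightarrow> real" and \<phi> :: "real \<Rightarrow> real"
  assumes W: "real_orthogonal m W" and B: "B \<in> carrier_mat m n" and mn: "m \<le> n"
    and d: "diagonal_mat (B * transpose_mat B)"
    and \<sigma>0: "\<And>i. i < m \<Longrightarrow> \<sigma> i \<ge> 0" and \<psi>0: "\<And>i. i < m \<Longrightarrow> \<psi> i \<ge> 0"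
    and \<phi>0: "\<And>y. y \<ge> 0 \<Longrightarrow> \<phi> y \<ge> 0"
    and young: "\<And>i y. i < m \<Longrightarrow> y \<ge> 0 \<Longrightarrow> \<sigma> i * y \<le> \<psi> i + \<phi> y"
  shows "(\<Sum>i<m. \<sigma> i * (W * B) $$ (i, i))
    \<le> (\<Sum>i<m. \<psi> i) + (\<Sum>j<m. \<phi> (sqrt (\<Sum>l<n. (B $$ (j, l))\<^sup>2)))"
proof -
  define r where "r = (\<lambda>j. sqrt (\<Sum>l<n. (B $$ (j, l))\<^sup>2))"
  have r0: "r j \<ge> 0" for j unfolding r_def by (simp add: sum_nonneg)
  obtain Q where BQ: "\<And>j l. j < m \<Longrightarrow> l < n \<Longrightarrow> B $$ (j, l) = r j * Q j l"
    and rowQ: "\<And>j. j < m \<Longrightarrow> (\<Sum>l<n. (Q j l)\<^sup>2) \<le> 1"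
    and colQ: "\<And>l. l < n \<Longrightarrow> (\<Sum>j<m. (Q j l)\<^sup>2) \<le> 1"
    using orthogonal_rows_normalization[OF B d] unfolding r_def by metis
  have Wc: "W \<in> carrier_mat m m" using W unfolding real_orthogonal_def by simp
  note rowW = real_orthogonal_row_norm[OF W] and colW = real_orthogonal_col_norm[OF W]
  define A where "A = (\<lambda>i j. (W $$ (i, j))\<^sup>2 + (Q j i)\<^sup>2)"
  have "(W * B) $$ (i, i) = (\<Sum>j<m. W $$ (i, j) * (r j * Q j i))" if "i < m" for i
  proof -
    have "(W * B) $$ (i, i) = (\<Sum>j<m. W $$ (i, j) * B $$ (j, i))"
      using index_mult_mat_sum[OF Wc B that, of i] that mn by simp
    also have "\<dots> = (\<Sum>j<m. W $$ (i, j) * (r j * Q j i))"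
      using BQ that mn by (intro sum.cong) auto
    finally show ?thesis .
  qed
  hence "(\<Sum>i<m. \<sigma> i * (W * B) $$ (i, i)) = (\<Sum>i<m. \<Sum>j<m. \<sigma> i * W $$ (i, j) * r j * Q j i)"
    by (simp add: sum_distrib_left mult.assoc)
  also have "\<dots> \<le> (\<Sum>i<m. \<Sum>j<m. (\<psi> i + \<phi> (r j)) * A i j / 2)"
  proof (intro sum_mono)
    fix i j assume "i \<in> {..<m}"
    thus "\<sigma> i * W $$ (i, j) * r j * Q j i \<le> (\<psi> i + \<phi> (r j)) * A i j / 2"
      using mult_le_by_amgm[OF \<sigma>0 r0 young] r0 unfolding A_def by simp
  qed
  also have "\<dots> \<le> (\<Sum>i<m. \<psi> i) + (\<Sum>j<m. \<phi> (r j))"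
  proof (rule sum_substochastic_weights_le)
    show "(\<Sum>j<m. A i j) \<le> 2" if "i < m" for i
    proof -
      have "(\<Sum>j<m. A i j) = (\<Sum>j<m. (W $$ (i, j))\<^sup>2) + (\<Sum>j<m. (Q j i)\<^sup>2)"
        unfolding A_def by (rule sum.distrib)
      thus ?thesis using rowW[OF that] colQ[of i] that mn by simp
    qed
    show "(\<Sum>i<m. A i j) \<le> 2" if "j < m" for j
    proof -
      have "(\<Sum>i<m. A i j) = (\<Sum>i<m. (W $$ (i, j))\<^sup>2) + (\<Sum>i<m. (Q j i)\<^sup>2)"
        unfolding A_def by (rule sum.distrib)
      moreover have "(\<Sum>i<m. (Q j i)\<^sup>2) \<le> (\<Sum>i<n. (Q j i)\<^sup>2)" using mn by (intro sum_mono2) auto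
      ultimately show ?thesis using colW[OF that] rowQ[OF that] by simp
    qed
  qed (use \<psi>0 \<phi>0 r0 in auto)
  finally show ?thesis unfolding r_def .
qed

section \<open>The proximal problem for the transformed Schatten-1 penalty\<close>

lemma orthogonal_rows_decomposition:
  fixes Z :: "real mat"
  assumes Z: "Z \<in> carrier_mat m n"
  obtains W B where "real_orthogonal m W" "B \<in> carrier_mat m n" "Z = W * B"
    "diagonal_mat (B * transpose_mat B)"
proof -
  have ZZ: "Z * transpose_mat Z \<in> carrier_mat m m" using Z by simp
  have "transpose_mat (Z * transpose_mat Z) = Z * transpose_mat Z"
    using transpose_mult[of Z m n "transpose_mat Z" m] Z by simp
  then obtain W where W: "real_orthogonal m W"
    and d: "diagonal_mat (transpose_mat W * (Z * transpose_mat Z) * W)"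
    using real_symmetric_orthogonal_diagonalization[OF ZZ] by blast
  have Wc: "W \<in> carrier_mat m m" and W1: "W * transpose_mat W = 1\<^sub>m m"
    using W unfolding real_orthogonal_def by auto
  define B where "B = transpose_mat W * Z"
  have "B * transpose_mat B = transpose_mat W * (Z * transpose_mat Z) * W"
    unfolding B_def using Wc Z by (simp add: transpose_mult[of _ m m Z n] assoc_mult_mat_dims)
  moreover have "Z = W * B"
    unfolding B_def using Wc Z W1 by (simp add: mult_left_inverse_cancel)
  moreover have "B \<in> carrier_mat m n" unfolding B_def using Wc Z by simp
  ultimately show ?thesis using that W d by simp
qed

lemma TS1_orthogonal_invariant:
  "real_orthogonal m U \<Longrightarrow> real_orthogonal n V \<Longrightarrow> M \<in> carrier_mat m n
    \<Longrightarrow> TS1 a (U * M * transpose_mat V) = TS1 a M"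
  unfolding TS1_def by (simp add: singular_values_orthogonal_invariant)

lemma TS1_orthogonal_rows:
  assumes "B \<in> carrier_mat m n" "diagonal_mat (B * transpose_mat B)"
  shows "TS1 a B = (\<Sum>j<m. rho a (sqrt (\<Sum>l<n. (B $$ (j, l))\<^sup>2)))"
proof -
  have "s \<ge> 0" if "s \<in># singular_values B" for s
    using that singular_values_orthogonal_rows[OF assms] by (auto simp: sum_nonneg)
  hence "TS1 a B = (\<Sum>s\<in>#singular_values B. rho a s)" by (rule TS1_eq_sum_mset)
  also have "\<dots> = (\<Sum>j<m. rho a (sqrt (\<Sum>l<n. (B $$ (j, l))\<^sup>2)))"
    unfolding singular_values_orthogonal_rows[OF assms]
    by (simp add: sum_unfold_sum_mset image_mset.compositionality o_def atLeast0LessThan)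
  finally show ?thesis .
qed

lemma diag_rect_carrier: "diag_rect m n c \<in> carrier_mat m n"
  unfolding diag_rect_def by simp

lemma diag_rect_entry [simp]:
  "i < m \<Longrightarrow> j < n \<Longrightarrow> diag_rect m n c $$ (i, j) = (if i = j then c i else 0)"
  unfolding diag_rect_def by simp

lemma frob_norm_sq_minus_diag_rect:
  assumes Z: "Z \<in> carrier_mat m n" and mn: "m \<le> n"
  shows "(frob_norm (Z - diag_rect m n c))\<^sup>2
    = (frob_norm Z)\<^sup>2 - 2 * (\<Sum>i<m. c i * Z $$ (i, i)) + (\<Sum>i<m. (c i)\<^sup>2)"
proof -
  have row: "(\<Sum>j<n. (Z $$ (i, j) - (if i = j then c i else 0))\<^sup>2)
      = (\<Sum>j<n. (Z $$ (i, j))\<^sup>2) - 2 * (c i * Z $$ (i, i)) + (c i)\<^sup>2" if "i < m" for i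
  proof -
    have "(\<Sum>j<n. (Z $$ (i, j) - (if i = j then c i else 0))\<^sup>2)
        = (\<Sum>j<n. (Z $$ (i, j))\<^sup>2 - (if i = j then 2 * (c i * Z $$ (i, i)) - (c i)\<^sup>2 else 0))"
      by (intro sum.cong) (auto simp: power2_eq_square algebra_simps)
    also have "\<dots> = (\<Sum>j<n. (Z $$ (i, j))\<^sup>2) - (2 * (c i * Z $$ (i, i)) - (c i)\<^sup>2)"
      using that mn by (simp add: sum_subtractf)
    finally show ?thesis by simp
  qed
  have "(frob_norm (Z - diag_rect m n c))\<^sup>2
      = (\<Sum>i<m. \<Sum>j<n. (Z $$ (i, j) - (if i = j then c i else 0))\<^sup>2)"
    unfolding frob_norm_sq using Z diag_rect_carrier[of m n c] by simp
  also have "\<dots> = (\<Sum>i<m. (\<Sum>j<n. (Z $$ (i, j))\<^sup>2) - 2 * (c i * Z $$ (i, i)) + (c i)\<^sup>2)"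
    using row by simp
  also have "\<dots> = (frob_norm Z)\<^sup>2 - 2 * (\<Sum>i<m. c i * Z $$ (i, i)) + (\<Sum>i<m. (c i)\<^sup>2)"
    unfolding frob_norm_sq using Z by (simp add: sum_subtractf sum.distrib sum_distrib_left)
  finally show ?thesis .
qed

lemma conj_minus_distrib:
  fixes U V M N :: "real mat"
  assumes "U \<in> carrier_mat m m" "V \<in> carrier_mat n n" "M \<in> carrier_mat m n" "N \<in> carrier_mat m n"
  shows "U * M * transpose_mat V - U * N * transpose_mat V = U * (M - N) * transpose_mat V"
  using assms by (simp add: mult_minus_distrib_mat minus_mult_distrib_mat[of _ m n])

lemma frob_norm_sq_orthogonal_rows:
  assumes W: "real_orthogonal m W" and B: "B \<in> carrier_mat m n"
  shows "(frob_norm (W * B))\<^sup>2 = (\<Sum>j<m. (sqrt (\<Sum>l<n. (B $$ (j, l))\<^sup>2))\<^sup>2)"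
proof -
  have "W * B = W * B * transpose_mat (1\<^sub>m n)" using W B unfolding real_orthogonal_def by simp
  hence "frob_norm (W * B) = frob_norm B"
    using frob_norm_orthogonal_invariant[OF W real_orthogonal_one B] by simp
  thus ?thesis using B by (simp add: frob_norm_sq sum_nonneg)
qed

lemma prox_objective_lower_bound:
  fixes U V X :: "real mat" and \<sigma> f :: "nat \<Rightarrow> real"
  assumes U: "real_orthogonal m U" and V: "real_orthogonal n V" and mn: "m \<le> n"
    and X: "X \<in> carrier_mat m n" and a: "a > 0" and lam: "lam \<ge> 0"
    and \<sigma>0: "\<And>i. i < m \<Longrightarrow> \<sigma> i \<ge> 0"
    and f: "\<And>i y. i < m \<Longrightarrow> y \<ge> 0 \<Longrightarrow> f i \<le> 1/2 * (y - \<sigma> i)\<^sup>2 + lam * rho a y"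
  shows "(\<Sum>i<m. f i) \<le> 1/2 * (frob_norm (X - U * diag_rect m n \<sigma> * transpose_mat V))\<^sup>2 + lam * TS1 a X"
proof -
  have Uc: "U \<in> carrier_mat m m" and Vc: "V \<in> carrier_mat n n"
    using U V unfolding real_orthogonal_def by auto
  define Z where "Z = transpose_mat U * X * V"
  have Zc: "Z \<in> carrier_mat m n" unfolding Z_def using Uc X Vc by simp
  have "U * Z * transpose_mat V = (U * transpose_mat U) * X * (V * transpose_mat V)"
    unfolding Z_def using Uc Vc X by (simp add: assoc_mult_mat_dims)
  hence XZ: "X = U * Z * transpose_mat V" using U V X unfolding real_orthogonal_def by simp
  obtain W B where W: "real_orthogonal m W" and B: "B \<in> carrier_mat m n" and ZWB: "Z = W * B"
    and d: "diagonal_mat (B * transpose_mat B)"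
    using orthogonal_rows_decomposition[OF Zc] by blast
  define r where "r = (\<lambda>j. sqrt (\<Sum>l<n. (B $$ (j, l))\<^sup>2))"
  have TSX: "TS1 a X = (\<Sum>j<m. rho a (r j))"
  proof -
    have "W * B = W * B * transpose_mat (1\<^sub>m n)" using W B unfolding real_orthogonal_def by simp
    hence "TS1 a X = TS1 a B"
      using XZ ZWB TS1_orthogonal_invariant[OF U V Zc] TS1_orthogonal_invariant[OF W real_orthogonal_one B]
      by simp
    thus ?thesis unfolding r_def by (simp add: TS1_orthogonal_rows[OF B d])
  qed
  have "X - U * diag_rect m n \<sigma> * transpose_mat V = U * (Z - diag_rect m n \<sigma>) * transpose_mat V"
    unfolding XZ using Uc Vc Zc diag_rect_carrier by (rule conj_minus_distrib)
  hence XY: "(frob_norm (X - U * diag_rect m n \<sigma> * transpose_mat V))\<^sup>2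
      = (\<Sum>j<m. (r j)\<^sup>2) - 2 * (\<Sum>i<m. \<sigma> i * Z $$ (i, i)) + (\<Sum>i<m. (\<sigma> i)\<^sup>2)"
    using frob_norm_orthogonal_invariant[OF U V minus_carrier_mat[OF diag_rect_carrier, of Z]]
      frob_norm_sq_minus_diag_rect[OF Zc mn] frob_norm_sq_orthogonal_rows[OF W B] Zc
    unfolding ZWB r_def by simp
  have "(\<Sum>i<m. \<sigma> i * Z $$ (i, i))
      \<le> (\<Sum>i<m. 1/2 * (\<sigma> i)\<^sup>2 - f i) + (\<Sum>j<m. 1/2 * (r j)\<^sup>2 + lam * rho a (r j))"
    unfolding ZWB r_def
  proof (rule diag_sum_le_separable_bound[OF W B mn d \<sigma>0])
    show "0 \<le> 1/2 * (\<sigma> i)\<^sup>2 - f i" if "i < m" for i using f[OF that, of 0] by simp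
    show "0 \<le> 1/2 * y\<^sup>2 + lam * rho a y" if "y \<ge> 0" for y using rho_nonneg[OF a that] lam by simp
    show "\<sigma> i * y \<le> 1/2 * (\<sigma> i)\<^sup>2 - f i + (1/2 * y\<^sup>2 + lam * rho a y)" if "i < m" "y \<ge> 0" for i y
      using f[OF that] by (simp add: power2_eq_square algebra_simps)
  qed
  thus ?thesis unfolding XY TSX
    by (simp add: sum_subtractf sum.distrib sum_distrib_left algebra_simps)
qed

lemma diag_rect_row_inner:
  assumes "j < m" "k < m" "m \<le> n"
  shows "(\<Sum>l<n. diag_rect m n c $$ (j, l) * diag_rect m n c $$ (k, l)) = (if j = k then (c j)\<^sup>2 else 0)"
proof -
  have "(\<Sum>l<n. diag_rect m n c $$ (j, l) * diag_rect m n c $$ (k, l))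
      = (\<Sum>l<n. if l = j then (if j = k then (c j)\<^sup>2 else 0) else 0)"
    using assms by (intro sum.cong) (auto simp: power2_eq_square)
  thus ?thesis using assms by simp
qed

lemma diag_rect_orthogonal_rows:
  assumes mn: "m \<le> n"
  shows "diagonal_mat (diag_rect m n c * transpose_mat (diag_rect m n c))"
  unfolding diagonal_mat_def
proof (intro allI impI)
  let ?D = "diag_rect m n c"
  fix j k assume "j < dim_row (?D * transpose_mat ?D)" "k < dim_col (?D * transpose_mat ?D)" "j \<noteq> k"
  hence jk: "j < m" "k < m" "j \<noteq> k" using diag_rect_carrier[of m n c] by auto
  have "(?D * transpose_mat ?D) $$ (j, k) = (\<Sum>l<n. ?D $$ (j, l) * transpose_mat ?D $$ (l, k))"
    using jk by (intro index_mult_mat_sum) (simp_all add: diag_rect_carrier)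
  also have "\<dots> = (\<Sum>l<n. ?D $$ (j, l) * ?D $$ (k, l))"
    using jk mn by (intro sum.cong) (simp_all add: diag_rect_def)
  also have "\<dots> = 0" using diag_rect_row_inner[OF jk(1,2) mn] jk(3) by simp
  finally show "(?D * transpose_mat ?D) $$ (j, k) = 0" .
qed

lemma prox_objective_at_diag:
  fixes U V :: "real mat" and c \<sigma> :: "nat \<Rightarrow> real"
  assumes U: "real_orthogonal m U" and V: "real_orthogonal n V" and mn: "m \<le> n"
    and c0: "\<And>i. i < m \<Longrightarrow> c i \<ge> 0"
  shows "1/2 * (frob_norm (U * diag_rect m n c * transpose_mat V - U * diag_rect m n \<sigma> * transpose_mat V))\<^sup>2
      + lam * TS1 a (U * diag_rect m n c * transpose_mat V)
    = (\<Sum>i<m. 1/2 * (c i - \<sigma> i)\<^sup>2 + lam * rho a (c i))"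
proof -
  let ?D = "diag_rect m n c"
  have Uc: "U \<in> carrier_mat m m" and Vc: "V \<in> carrier_mat n n"
    using U V unfolding real_orthogonal_def by auto
  have rows: "(\<Sum>l<n. (?D $$ (j, l))\<^sup>2) = (c j)\<^sup>2" if "j < m" for j
    using diag_rect_row_inner[OF that that mn] by (simp add: power2_eq_square)
  have "diagonal_mat (?D * transpose_mat ?D)" using mn by (rule diag_rect_orthogonal_rows)
  hence "TS1 a ?D = (\<Sum>j<m. rho a (c j))"
    using TS1_orthogonal_rows[OF diag_rect_carrier] rows c0 by simp
  hence TS: "TS1 a (U * ?D * transpose_mat V) = (\<Sum>i<m. rho a (c i))"
    using TS1_orthogonal_invariant[OF U V diag_rect_carrier] by simp
  have "(frob_norm (U * ?D * transpose_mat V - U * diag_rect m n \<sigma> * transpose_mat V))\<^sup>2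
      = (frob_norm (?D - diag_rect m n \<sigma>))\<^sup>2"
    using conj_minus_distrib[OF Uc Vc diag_rect_carrier diag_rect_carrier]
      frob_norm_orthogonal_invariant[OF U V minus_carrier_mat[OF diag_rect_carrier, of ?D]]
    by simp
  also have "\<dots> = (\<Sum>i<m. (c i)\<^sup>2) - 2 * (\<Sum>i<m. \<sigma> i * c i) + (\<Sum>i<m. (\<sigma> i)\<^sup>2)"
    using frob_norm_sq_minus_diag_rect[OF diag_rect_carrier mn] rows mn
    by (simp add: frob_norm_sq diag_rect_def)
  also have "\<dots> = (\<Sum>i<m. (c i - \<sigma> i)\<^sup>2)"
    by (simp add: power2_diff sum.distrib sum_subtractf sum_distrib_left mult.commute mult.left_commute)
  finally show ?thesis unfolding TS by (simp add: sum.distrib sum_distrib_left)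
qed

theorem theorem3:
  fixes m n :: nat and a lam :: real and Y U V :: "real mat" and \<sigma> :: "nat \<Rightarrow> real"
  assumes "m \<le> n" and "a > 0" and "lam > 0"
    and "Y \<in> carrier_mat m n" and "U \<in> carrier_mat m m" and "V \<in> carrier_mat n n"
    and "U * transpose_mat U = 1\<^sub>m m" and "transpose_mat U * U = 1\<^sub>m m"
    and "V * transpose_mat V = 1\<^sub>m n" and "transpose_mat V * V = 1\<^sub>m n"
    and "\<And>i j. i \<le> j \<Longrightarrow> j < m \<Longrightarrow> \<sigma> j \<le> \<sigma> i"
    and "\<And>i. i < m \<Longrightarrow> \<sigma> i \<ge> 0"
    and "Y = U * diag_rect m n \<sigma> * transpose_mat V"
  shows "\<forall>X \<in> carrier_mat m n.
    1/2 * (frob_norm (U * diag_rect m n (\<lambda>i. g_fun lam a (\<sigma> i)) * transpose_mat V - Y))\<^sup>2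
      + lam * TS1 a (U * diag_rect m n (\<lambda>i. g_fun lam a (\<sigma> i)) * transpose_mat V)
    \<le> 1/2 * (frob_norm (X - Y))\<^sup>2 + lam * TS1 a X"
proof
  note mn = assms(1) and a = assms(2) and lam = assms(3) and \<sigma>0 = assms(12) and Y = assms(13)
  fix X :: "real mat" assume X: "X \<in> carrier_mat m n"
  have U: "real_orthogonal m U" and V: "real_orthogonal n V"
    using assms(5-10) unfolding real_orthogonal_def by simp_all
  let ?g = "\<lambda>i. g_fun lam a (\<sigma> i)"
  have "1/2 * (frob_norm (U * diag_rect m n ?g * transpose_mat V - Y))\<^sup>2
      + lam * TS1 a (U * diag_rect m n ?g * transpose_mat V)
    = (\<Sum>i<m. 1/2 * (?g i - \<sigma> i)\<^sup>2 + lam * rho a (?g i))"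
    unfolding Y using g_fun_nonneg[OF a lam \<sigma>0] by (intro prox_objective_at_diag[OF U V mn])
  also have "\<dots> \<le> 1/2 * (frob_norm (X - Y))\<^sup>2 + lam * TS1 a X"
    unfolding Y using g_fun_minimizes[OF a lam \<sigma>0] \<sigma>0 lam
    by (intro prox_objective_lower_bound[OF U V mn X a]) auto
  finally show "1/2 * (frob_norm (U * diag_rect m n ?g * transpose_mat V - Y))\<^sup>2
      + lam * TS1 a (U * diag_rect m n ?g * transpose_mat V)
    \<le> 1/2 * (frob_norm (X - Y))\<^sup>2 + lam * TS1 a X" .
qed

end
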